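(* For every integer $m\ge1$, $$\beta(m;t,q)=L_m(1-q-tq,\,-tq^2).$$
   Context: For an integer $m\ge1$ and $0\le d\le m-1$ let $\rho(m;t,d)=\frac{m}{m-d}\sum_{i=0}^{d}\binom{m-1-d+i}{i}\binom{m-1-i}{d-i}t^i$, and let $\rho(m;t,m)=1+t^m$. Define $\beta(m;t,q)=\sum_{d=0}^{m}\rho(m;t,d)(-q)^d$. The Lucas polynomials are $L_0(x,s)=2$ and, for $m\ge1$, $L_m(x,s)=\sum_{i=0}^{\lfloor m/2\rfloor}\binom{m-i}{i}\frac{m}{m-i}s^ix^{m-2i}$. *)

theory Defs
  imports Main
begin

definition rho :: "nat \<Rightarrow> 'a::field_char_0 \<Rightarrow> nat \<Rightarrow> 'a" where
  "rho m t d =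
     (if d = m then 1 + t ^ m
      else of_nat m / of_nat (m - d) *
           (\<Sum>i = 0..d. of_nat ((m - 1 - d + i) choose i) * of_nat ((m - 1 - i) choose (d - i)) * t ^ i))"

definition beta :: "nat \<Rightarrow> 'a::field_char_0 \<Rightarrow> 'a \<Rightarrow> 'a" where
  "beta m t q = (\<Sum>d = 0..m. rho m t d * (- q) ^ d)"

definition lucas :: "nat \<Rightarrow> 'a::field_char_0 \<Rightarrow> 'a \<Rightarrow> 'a" where
  "lucas m x s =
     (if m = 0 then 2
      else (\<Sum>i = 0..m div 2. of_nat ((m - i) choose i) * (of_nat m / of_nat (m - i)) * s ^ i * x ^ (m - 2 * i)))"

end

theory Submission
  imports Defs
begin

(* Both sides satisfy f (n + 2) = x f (n + 1) + s f n with x = 1 - q - t q and s = - t q^2, and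
   they agree at n = 0 and n = 1, where they are 2 and x.  Each side is a sum over lattice points, and the recurrence
   in n comes from a Pascal-type recurrence of the coefficients.  For the Lucas polynomial the
   coefficient of x^a s^i is C(a+i, i) + C(a+i-1, i-1).  For beta, the coefficient c_k(i,j) of
   t^i (-q)^(i+j) in beta (k+i+j) is, for k > 0, A_k(i) A_k(j) + A_(k+1)(i-1) A_k(j) + A_k(i) A_(k+1)(j-1)
   with A_k(i) = C(k+i-1, i); as A_k(i) - A_k(i-1) = A_(k-1)(i), the mixed backward difference in
   (i, j) maps c_k to c_(k-1).  Summed against t^i u^(i+j) with u = -q, this is the recurrence with
   x = 1 + u + t u and s = - t u^2. *)

(* If f is the coefficient sequence of a power series F(x), then shift f and bdiff f are those of
   x F(x) and (1 - x) F(x). *)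
definition shift :: "(nat \<Rightarrow> 'a::zero) \<Rightarrow> nat \<Rightarrow> 'a" where
  "shift f i = (if i = 0 then 0 else f (i - 1))"

definition bdiff :: "(nat \<Rightarrow> 'a::ab_group_add) \<Rightarrow> nat \<Rightarrow> 'a" where
  "bdiff f i = f i - shift f i"

lemma bdiff_add: "bdiff (\<lambda>i. f i + g i) i = bdiff f i + bdiff g i"
  by (simp add: bdiff_def shift_def)

lemma bdiff_mult_left: "bdiff (\<lambda>i. c * f i) i = c * bdiff f i"
  for c :: "'a::ring"
  by (simp add: bdiff_def shift_def right_diff_distrib)

lemma bdiff_mult_right: "bdiff (\<lambda>i. f i * c) i = bdiff f i * c"
  for c :: "'a::ring"
  by (simp add: bdiff_def shift_def left_diff_distrib)

lemma bdiff_shift: "bdiff (shift f) i = shift (bdiff f) i"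
  by (simp add: bdiff_def shift_def)

lemma bdiff_bdiff_expand:
  "bdiff (\<lambda>i. bdiff (c i) j) i =
     c i j - shift (\<lambda>j. c i j) j - shift (\<lambda>i. c i j) i + shift (\<lambda>i. shift (c i) j) i"
  by (simp add: bdiff_def shift_def)

(* For i = 0 < a the second binomial vanishes; at a = i = 0 truncated subtraction makes it 1,
   which gives the constant Lucas polynomial 2. *)
definition lucas_coeff :: "nat \<Rightarrow> nat \<Rightarrow> nat" where
  "lucas_coeff a i = ((a + i) choose a) + ((a + i - 1) choose a)"

lemma lucas_coeff_rec:
  assumes "2 \<le> a + 2 * i"
  shows "lucas_coeff a i = shift (\<lambda>a. lucas_coeff a i) a + shift (lucas_coeff a) i"
  using assms
  by (cases a; cases i) (auto simp: lucas_coeff_def shift_def binomial_eq_0)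

definition lucas_index :: "nat \<Rightarrow> (nat \<times> nat) set" where
  "lucas_index n = {(a, i). a + 2 * i = n}"

lemma finite_lucas_index [simp]: "finite (lucas_index n)"
  by (rule finite_subset[of _ "{..n} \<times> {..n}"]) (auto simp: lucas_index_def)

lemma sum_lucas_index_shift:
  "(\<Sum>(a, i)\<in>lucas_index n. f (a + b) (i + e)) =
   (\<Sum>(a, i)\<in>lucas_index (n + b + 2 * e). if b \<le> a \<and> e \<le> i then f a i else 0)"
proof -
  have "(\<Sum>(a, i)\<in>lucas_index (n + b + 2 * e). if b \<le> a \<and> e \<le> i then f a i else 0) =
        (\<Sum>p\<in>{p\<in>lucas_index (n + b + 2 * e). case p of (a, i) \<Rightarrow> b \<le> a \<and> e \<le> i}. case p of (a, i) \<Rightarrow> f a i)"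
    by (subst sum.inter_filter) (auto intro!: sum.cong)
  also have "\<dots> = (\<Sum>(a, i)\<in>lucas_index n. f (a + b) (i + e))"
    by (rule sum.reindex_bij_witness[where i="\<lambda>(a, i). (a + b, i + e)" and j="\<lambda>(a, i). (a - b, i - e)"])
       (auto simp: lucas_index_def)
  finally show ?thesis by simp
qed

definition lucas_sum :: "'a::comm_ring_1 \<Rightarrow> 'a \<Rightarrow> nat \<Rightarrow> 'a" where
  "lucas_sum x s n = (\<Sum>(a, i)\<in>lucas_index n. of_nat (lucas_coeff a i) * x ^ a * s ^ i)"

lemma lucas_sum_rec:
  "lucas_sum x s (Suc (Suc n)) = x * lucas_sum x s (Suc n) + s * lucas_sum x s n"
proof -
  let ?term = "\<lambda>c a i. of_nat c * x ^ a * s ^ i"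
  have "x * lucas_sum x s (Suc n) = (\<Sum>(a, i)\<in>lucas_index (Suc n). ?term (lucas_coeff a i) (a + 1) i)"
    unfolding lucas_sum_def sum_distrib_left by (rule sum.cong) (auto simp: algebra_simps)
  also have "\<dots> = (\<Sum>(a, i)\<in>lucas_index (Suc (Suc n)). ?term (shift (\<lambda>a. lucas_coeff a i) a) a i)"
    using sum_lucas_index_shift[where f="\<lambda>a i. ?term (lucas_coeff (a - 1) i) a i" and b=1 and e=0]
    by (auto simp: shift_def intro!: sum.cong)
  finally have x_times: "x * lucas_sum x s (Suc n) = \<dots>" .
  have "s * lucas_sum x s n = (\<Sum>(a, i)\<in>lucas_index n. ?term (lucas_coeff a i) a (i + 1))"
    unfolding lucas_sum_def sum_distrib_left by (rule sum.cong) (auto simp: algebra_simps)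
  also have "\<dots> = (\<Sum>(a, i)\<in>lucas_index (Suc (Suc n)). ?term (shift (lucas_coeff a) i) a i)"
    using sum_lucas_index_shift[where f="\<lambda>a i. ?term (lucas_coeff a (i - 1)) a i" and b=0 and e=1]
    by (auto simp: shift_def intro!: sum.cong)
  finally have s_times: "s * lucas_sum x s n = \<dots>" .
  have "lucas_coeff a i = shift (\<lambda>a. lucas_coeff a i) a + shift (lucas_coeff a) i"
    if "(a, i) \<in> lucas_index (Suc (Suc n))" for a i
    using that by (intro lucas_coeff_rec) (simp add: lucas_index_def)
  then show ?thesis
    unfolding x_times s_times unfolding lucas_sum_def sum.distrib[symmetric]
    by (intro sum.cong) (auto simp: algebra_simps)
qed

lemma lucas_coeff_absorb: "(a + i) * lucas_coeff a i = (a + 2 * i) * ((a + i) choose i)"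
proof -
  have "i * ((a + i) choose a) = (a + i) * ((a + i - 1) choose a)"
    using binomial_absorb_comp[of "a + i" a] by simp
  moreover have "(a + i) choose a = (a + i) choose i"
    using binomial_symmetric[of a "a + i"] by simp
  ultimately show ?thesis
    by (simp add: lucas_coeff_def algebra_simps)
qed

lemma lucas_eq_lucas_sum: "lucas m x s = lucas_sum x s m"
proof (cases "m = 0")
  case True
  have "lucas_index 0 = {(0, 0)}" by (auto simp: lucas_index_def)
  then show ?thesis using True by (simp add: lucas_def lucas_sum_def lucas_coeff_def)
next
  case False
  have "lucas m x s = (\<Sum>i = 0..m div 2. of_nat ((m - i) choose i) * (of_nat m / of_nat (m - i)) * s ^ i * x ^ (m - 2 * i))"
    using False by (simp add: lucas_def)
  also have "\<dots> = lucas_sum x s m"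
    unfolding lucas_sum_def
  proof (rule sum.reindex_bij_witness[where j="\<lambda>i. (m - 2 * i, i)" and i="\<lambda>(a, i). i"])
    fix i assume "i \<in> {0..m div 2}"
    then have i: "2 * i \<le> m" by auto
    have "(m - i) * lucas_coeff (m - 2 * i) i = m * ((m - i) choose i)"
      using lucas_coeff_absorb[of "m - 2 * i" i] i by (simp add: algebra_simps)
    then have "of_nat (m - i) * of_nat (lucas_coeff (m - 2 * i) i) = (of_nat m * of_nat ((m - i) choose i) :: 'a)"
      by (metis of_nat_mult)
    moreover have "(of_nat (m - i) :: 'a) \<noteq> 0" using i False by simp
    ultimately have "(of_nat (lucas_coeff (m - 2 * i) i) :: 'a) = of_nat ((m - i) choose i) * (of_nat m / of_nat (m - i))"
      by (simp add: field_simps)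
    then show "(case (m - 2 * i, i) of (a, i) \<Rightarrow> of_nat (lucas_coeff a i) * x ^ a * s ^ i) =
      of_nat ((m - i) choose i) * (of_nat m / of_nat (m - i)) * s ^ i * x ^ (m - 2 * i)"
      by (simp add: mult_ac)
  qed (auto simp: lucas_index_def)
  finally show ?thesis .
qed

lemma lucas_rec: "lucas (Suc (Suc n)) x s = x * lucas (Suc n) x s + s * lucas n x s"
  unfolding lucas_eq_lucas_sum by (rule lucas_sum_rec)

definition multichoose :: "nat \<Rightarrow> nat \<Rightarrow> nat" where
  "multichoose k i = (k + i - 1) choose i"

lemma multichoose_absorb: "k * multichoose (Suc k) i = Suc i * multichoose k (Suc i)"
proof (cases k)
  case (Suc k')
  then show ?thesis
    using Suc_times_binomial_add[of i k'] by (simp add: multichoose_def add.commute)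
qed (simp add: multichoose_def)

lemma bdiff_multichoose:
  "bdiff (\<lambda>i. of_nat (multichoose (Suc k) i) :: 'a::ring_1) = (\<lambda>i. of_nat (multichoose k i))"
proof
  show "bdiff (\<lambda>i. of_nat (multichoose (Suc k) i) :: 'a) i = of_nat (multichoose k i)" for i
    by (cases i) (simp_all add: bdiff_def shift_def multichoose_def)
qed

definition beta_coeff :: "nat \<Rightarrow> nat \<Rightarrow> nat \<Rightarrow> 'a::field_char_0" where
  "beta_coeff k i j =
     (if k = 0 then (if i = 0 then 1 else 0) + (if j = 0 then 1 else 0)
      else of_nat (k + i + j) / of_nat k * of_nat (multichoose k i) * of_nat (multichoose k j))"

lemma beta_coeff_product:
  fixes k :: nat
  defines "a \<equiv> \<lambda>k i. of_nat (multichoose k i) :: 'a::field_char_0"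
  assumes "0 < k"
  shows "beta_coeff k i j = a k i * a k j + shift (a (Suc k)) i * a k j + a k i * shift (a (Suc k)) j"
proof -
  have absorb: "of_nat k * shift (a (Suc k)) i = of_nat i * a k i" for i
  proof (cases i)
    case (Suc i')
    have "of_nat (k * multichoose (Suc k) i') = (of_nat (Suc i' * multichoose k (Suc i')) :: 'a)"
      by (simp only: multichoose_absorb)
    then show ?thesis
      unfolding Suc shift_def a_def of_nat_mult by simp
  qed (simp add: shift_def)
  have "(of_nat k :: 'a) \<noteq> 0" using \<open>0 < k\<close> by simp
  then have shift_eq: "shift (a (Suc k)) i = of_nat i / of_nat k * a k i" for i
    using absorb[of i] by (simp add: field_simps)
  have "beta_coeff k i j = of_nat (k + i + j) / of_nat k * a k i * a k j"
    using \<open>0 < k\<close> by (simp add: beta_coeff_def a_def)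
  then show ?thesis
    using \<open>(of_nat k :: 'a) \<noteq> 0\<close> by (simp add: shift_eq field_simps)
qed

lemma bdiff_bdiff_beta_coeff:
  assumes "2 \<le> k + i + j"
  shows "bdiff (\<lambda>i. bdiff (beta_coeff k i) j) i = (shift (\<lambda>k. beta_coeff k i j) k :: 'a::field_char_0)"
proof (cases k)
  case 0
  with assms show ?thesis
    by (cases i; cases j) (auto simp: bdiff_def shift_def beta_coeff_def)
next
  case (Suc k')
  let ?a = "\<lambda>k i. of_nat (multichoose k i) :: 'a"
  have "beta_coeff k = (\<lambda>i j. ?a k i * ?a k j + shift (?a (Suc k)) i * ?a k j + ?a k i * shift (?a (Suc k)) j)"
    using Suc by (intro ext beta_coeff_product) simp
  then have "bdiff (\<lambda>i. bdiff (beta_coeff k i) j) i =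
      ?a k' i * ?a k' j + shift (?a (Suc k')) i * ?a k' j + ?a k' i * shift (?a (Suc k')) j"
    by (simp add: Suc bdiff_add bdiff_mult_left bdiff_mult_right bdiff_shift bdiff_multichoose)
  also have "\<dots> = beta_coeff k' i j"
  proof (cases "k' = 0")
    case True
    with assms Suc show ?thesis
      by (cases i; cases j) (auto simp: shift_def multichoose_def beta_coeff_def binomial_eq_0)
  qed (simp add: beta_coeff_product)
  finally show ?thesis
    by (simp add: Suc shift_def)
qed

definition beta_index :: "nat \<Rightarrow> (nat \<times> nat \<times> nat) set" where
  "beta_index n = {(k, i, j). k + i + j = n}"

lemma finite_beta_index [simp]: "finite (beta_index n)"
  by (rule finite_subset[of _ "{..n} \<times> {..n} \<times> {..n}"]) (auto simp: beta_index_def)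

lemma sum_beta_index_shift:
  "(\<Sum>(k, i, j)\<in>beta_index n. f (k + a) (i + b) (j + e)) =
   (\<Sum>(k, i, j)\<in>beta_index (n + a + b + e). if a \<le> k \<and> b \<le> i \<and> e \<le> j then f k i j else 0)"
proof -
  have "(\<Sum>(k, i, j)\<in>beta_index (n + a + b + e). if a \<le> k \<and> b \<le> i \<and> e \<le> j then f k i j else 0) =
        (\<Sum>p\<in>{p\<in>beta_index (n + a + b + e). case p of (k, i, j) \<Rightarrow> a \<le> k \<and> b \<le> i \<and> e \<le> j}.
           case p of (k, i, j) \<Rightarrow> f k i j)"
    by (subst sum.inter_filter) (auto intro!: sum.cong)
  also have "\<dots> = (\<Sum>(k, i, j)\<in>beta_index n. f (k + a) (i + b) (j + e))"
    by (rule sum.reindex_bij_witness[where i="\<lambda>(k, i, j). (k + a, i + b, j + e)"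
                                       and j="\<lambda>(k, i, j). (k - a, i - b, j - e)"])
       (auto simp: beta_index_def)
  finally show ?thesis by simp
qed

definition beta_sum :: "'a::field_char_0 \<Rightarrow> 'a \<Rightarrow> nat \<Rightarrow> 'a" where
  "beta_sum t u n = (\<Sum>(k, i, j)\<in>beta_index n. beta_coeff k i j * t ^ i * u ^ (i + j))"

lemma beta_sum_times_linear:
  "(1 + u + t * u) * beta_sum t u (Suc n) =
   (\<Sum>(k, i, j)\<in>beta_index (Suc (Suc n)).
      (shift (\<lambda>k. beta_coeff k i j) k + shift (beta_coeff k i) j + shift (\<lambda>i. beta_coeff k i j) i)
      * t ^ i * u ^ (i + j))"
proof -
  let ?term = "\<lambda>c i j. c * t ^ i * u ^ (i + j)"
  let ?sum = "\<lambda>n f. \<Sum>(k, i, j)\<in>beta_index n. f k i j"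
  have "(1 + u + t * u) * beta_sum t u (Suc n) =
      ?sum (Suc n) (\<lambda>k i j. ?term (beta_coeff k i j) i j)
      + ?sum (Suc n) (\<lambda>k i j. ?term (beta_coeff k i j) i (j + 1))
      + ?sum (Suc n) (\<lambda>k i j. ?term (beta_coeff k i j) (i + 1) j)"
    unfolding beta_sum_def sum_distrib_left sum.distrib[symmetric]
    by (rule sum.cong) (auto simp: algebra_simps)
  also have "?sum (Suc n) (\<lambda>k i j. ?term (beta_coeff k i j) i j) =
      ?sum (Suc (Suc n)) (\<lambda>k i j. ?term (shift (\<lambda>k. beta_coeff k i j) k) i j)"
    using sum_beta_index_shift[where f="\<lambda>k i j. ?term (beta_coeff (k - 1) i j) i j" and a=1 and b=0 and e=0]
    by (auto simp: shift_def intro!: sum.cong)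
  also have "?sum (Suc n) (\<lambda>k i j. ?term (beta_coeff k i j) i (j + 1)) =
      ?sum (Suc (Suc n)) (\<lambda>k i j. ?term (shift (beta_coeff k i) j) i j)"
    using sum_beta_index_shift[where f="\<lambda>k i j. ?term (beta_coeff k i (j - 1)) i j" and a=0 and b=0 and e=1]
    by (auto simp: shift_def intro!: sum.cong)
  also have "?sum (Suc n) (\<lambda>k i j. ?term (beta_coeff k i j) (i + 1) j) =
      ?sum (Suc (Suc n)) (\<lambda>k i j. ?term (shift (\<lambda>i. beta_coeff k i j) i) i j)"
    using sum_beta_index_shift[where f="\<lambda>k i j. ?term (beta_coeff k (i - 1) j) i j" and a=0 and b=1 and e=0]
    by (auto simp: shift_def intro!: sum.cong)
  also have "?sum (Suc (Suc n)) (\<lambda>k i j. ?term (shift (\<lambda>k. beta_coeff k i j) k) i j)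
      + ?sum (Suc (Suc n)) (\<lambda>k i j. ?term (shift (beta_coeff k i) j) i j)
      + ?sum (Suc (Suc n)) (\<lambda>k i j. ?term (shift (\<lambda>i. beta_coeff k i j) i) i j) =
      ?sum (Suc (Suc n)) (\<lambda>k i j. ?term (shift (\<lambda>k. beta_coeff k i j) k + shift (beta_coeff k i) j
        + shift (\<lambda>i. beta_coeff k i j) i) i j)"
    unfolding sum.distrib[symmetric] by (intro sum.cong) (auto simp: algebra_simps)
  finally show ?thesis .
qed

lemma beta_sum_times_quadratic:
  "t * u\<^sup>2 * beta_sum t u n =
   (\<Sum>(k, i, j)\<in>beta_index (Suc (Suc n)). shift (\<lambda>i. shift (beta_coeff k i) j) i * t ^ i * u ^ (i + j))"
proof -
  have "t * u\<^sup>2 * beta_sum t u n =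
      (\<Sum>(k, i, j)\<in>beta_index n. beta_coeff k i j * t ^ (i + 1) * u ^ ((i + 1) + (j + 1)))"
    unfolding beta_sum_def sum_distrib_left
    by (rule sum.cong) (auto simp: algebra_simps power2_eq_square)
  also have "\<dots> = (\<Sum>(k, i, j)\<in>beta_index (Suc (Suc n)). shift (\<lambda>i. shift (beta_coeff k i) j) i * t ^ i * u ^ (i + j))"
    using sum_beta_index_shift[where f="\<lambda>k i j. beta_coeff k (i - 1) (j - 1) * t ^ i * u ^ (i + j)" and a=0 and b=1 and e=1]
    by (auto simp: shift_def intro!: sum.cong)
  finally show ?thesis .
qed

lemma beta_sum_rec:
  "beta_sum t u (Suc (Suc n)) = (1 + u + t * u) * beta_sum t u (Suc n) - t * u\<^sup>2 * beta_sum t u n"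
proof -
  have coeff_rec: "shift (\<lambda>k. beta_coeff k i j) k =
      beta_coeff k i j - shift (beta_coeff k i) j - shift (\<lambda>i. beta_coeff k i j) i
      + shift (\<lambda>i. shift (beta_coeff k i) j) i"
    if "(k, i, j) \<in> beta_index (Suc (Suc n))" for k i j
    using bdiff_bdiff_beta_coeff[of k i j, symmetric] that
    unfolding bdiff_bdiff_expand by (simp add: beta_index_def)
  show ?thesis
    unfolding beta_sum_times_linear beta_sum_times_quadratic
    unfolding beta_sum_def sum_subtractf[symmetric]
    by (intro sum.cong) (auto simp: coeff_rec algebra_simps)
qed

lemma rho_eq_sum_beta_coeff:
  assumes "d \<le> m"
  shows "rho m t d = (\<Sum>i = 0..d. beta_coeff (m - d) i (d - i) * t ^ i)"
proof (cases "d = m")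
  case True
  have "(\<Sum>i = 0..m. beta_coeff 0 i (m - i) * t ^ i) = (\<Sum>i = 0..m. (if i = 0 then 1 else 0) + (if i = m then t ^ m else 0))"
    by (intro sum.cong) (auto simp: beta_coeff_def)
  with True show ?thesis
    by (simp add: rho_def sum.distrib)
next
  case False
  with assms have "m - d + i - 1 = m - 1 - d + i" "m - d + (d - i) - 1 = m - 1 - i" if "i \<le> d" for i
    using that by simp_all
  with False assms show ?thesis
    by (auto simp: rho_def beta_coeff_def multichoose_def sum_distrib_left algebra_simps intro!: sum.cong)
qed

lemma beta_eq_beta_sum: "beta m t q = beta_sum t (- q) m"
proof -
  have "beta m t q = (\<Sum>d = 0..m. \<Sum>i = 0..d. beta_coeff (m - d) i (d - i) * t ^ i * (- q) ^ d)"
    unfolding beta_def by (intro sum.cong refl) (simp add: rho_eq_sum_beta_coeff sum_distrib_right)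
  also have "\<dots> = (\<Sum>(d, i)\<in>Sigma {0..m} (\<lambda>d. {0..d}). beta_coeff (m - d) i (d - i) * t ^ i * (- q) ^ d)"
    by (rule sum.Sigma) auto
  also have "\<dots> = beta_sum t (- q) m"
    unfolding beta_sum_def
    by (rule sum.reindex_bij_witness[where j="\<lambda>(d, i). (m - d, i, d - i)" and i="\<lambda>(k, i, j). (i + j, i)"])
       (auto simp: beta_index_def)
  finally show ?thesis .
qed

lemma beta_rec:
  "beta (Suc (Suc n)) t q = (1 - q - t * q) * beta (Suc n) t q + (- t * q\<^sup>2) * beta n t q"
  unfolding beta_eq_beta_sum beta_sum_rec by simp

theorem lemma2p2:
  fixes t q :: "'a::field_char_0" and m :: nat
  assumes "m \<ge> 1"
  shows "beta m t q = lucas m (1 - q - t * q) (- t * q ^ 2)"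
proof -
  have "beta n t q = lucas n (1 - q - t * q) (- t * q ^ 2)" for n
  proof (induction n rule: induct_nat_012)
    case (ge2 n)
    then show ?case by (simp only: beta_rec lucas_rec)
  qed (simp_all add: beta_def rho_def lucas_def algebra_simps)
  then show ?thesis .
qed

end
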